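(* Let $a,b$ be vertices of $\mathcal{CG}(\Sigma)$. For all $x,y,z\in Cyl(a,b)$ one has ${\rm Diff}_{a,b}(x,z)={\rm Diff}_{a,b}(x,y)+{\rm Diff}_{a,b}(y,z)$. Consequently, the relation ${\rm Diff}_{a,b}(x,y)=0$ is an equivalence relation on $Cyl(a,b)$ (its classes are called slices); the value ${\rm Diff}_{a,b}(x,y)$ depends only on the slices of $x$ and $y$; and the relation on slices defined by $S<S'$ if ${\rm Diff}_{a,b}(x,y)<0$ for all $x\in S$, $y\in S'$ is a total order on the set of slices of $Cyl(a,b)$.
   Context: $\Sigma$ is a compact orientable surface and $\mathcal{CG}(\Sigma)$ its curve graph with path metric $d$ (written $|u-v|=d(u,v)$); $\delta\in\mathbb{N}$ is a hyperbolicity constant. Tight geodesics are those of Masur–Minsky/Bowditch. Constants: $\lambda=1000\delta$; $\epsilon$ a positive integer such that any $\lambda$-quasi-geodesic stays within $\epsilon$ of any geodesic joining its endpoints; $\mu=(100\epsilon+\lambda^2)\cdot 40\lambda$; $\nu=40\lambda(\epsilon+100\lambda\delta)$. Paths start and end at vertices; length is number of edges. For an integer $l\ge\mu$, an $l$-cptg is a $\nu$-local $\frac{\lambda}{2}$-quasi-geodesic $f:[a,b]\to\mathcal{CG}(\Sigma)$ (every subpath of length at most $\nu$ is a $\frac{\lambda}{2}$-bi-Lipschitz embedding of a real segment) with a subdivision $a=c_1\le d_1\le c_2\le\dots\le c_n\le d_n=b$ such that each $f([c_i,d_i])$ is a $\mu$-local tight geodesic (every subpath of length $\mu$ is a tight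 geodesic), of length at least $l$ for $2\le i\le n-1$, each $f([d_i,c_{i+1}])$ has length at most $\epsilon$, and $f([a,b])$ lies in the $2\epsilon$-neighbourhood of a tight geodesic from $f(a)$ to $f(b)$. The $l$-cylinder $Cyl_l(x,y)$ is the set of vertices $v$ such that for some $l$-cptg $f$ from $x$ to $y$ and some $i$, $v=f(t)$, $t\in[c_i,d_i]$, $d(f(c_i),v)\ge l$ if $f(c_i)\ne x$, $d(f(d_i),v)\ge l$ if $f(d_i)\ne y$. An integer $l\ge\mu$ is fixed such that all $l$-cylinders are finite, and $Cyl(a,b)$ denotes $Cyl_l(a,b)$. For $x\in Cyl(a,b)$: $N^{(a,b)}_R(x)$ is the set of $v\in Cyl(a,b)$ with $|a-x|<|a-v|$ and $|x-v|>100\delta$; $N^{(a,b)}_L(x)$ is the set of $v\in Cyl(a,b)$ with $|a-x|>|a-v|$ and $|x-v|>100\delta$. For $x,y\in Cyl(a,b)$, ${\rm Diff}_{a,b}(x,y)=\sharp(N_L(x)\setminus N_L(y))-\sharp(N_L(y)\setminus N_L(x))+\sharp(N_R(y)\setminus N_R(x))-\sharp(N_R(x)\setminus N_R(y))$, with $N=N^{(a,b)}$ and $\sharp$ denoting cardinality. *)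

theory Defs
  imports Main
begin

text \<open>Abstract setting: vertices of the curve graph have type 'v, the path metric is
  d :: 'v => 'v => nat, delta is the hyperbolicity constant, and Cyl a b is the
  l-cylinder Cyl_l(a,b) (assumed finite, as in the paper's standing convention).\<close>

definition N_R :: "('v \<Rightarrow> 'v \<Rightarrow> nat) \<Rightarrow> nat \<Rightarrow> ('v \<Rightarrow> 'v \<Rightarrow> 'v set) \<Rightarrow> 'v \<Rightarrow> 'v \<Rightarrow> 'v \<Rightarrow> 'v set" where
  "N_R d \<delta> Cyl a b x = {v \<in> Cyl a b. d a x < d a v \<and> d x v > 100 * \<delta>}"

definition N_L :: "('v \<Rightarrow> 'v \<Rightarrow> nat) \<Rightarrow> nat \<Rightarrow> ('v \<Rightarrow> 'v \<Rightarrow> 'v set) \<Rightarrow> 'v \<Rightarrow> 'v \<Rightarrow> 'v \<Rightarrow> 'v set" where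
  "N_L d \<delta> Cyl a b x = {v \<in> Cyl a b. d a x > d a v \<and> d x v > 100 * \<delta>}"

definition Diff :: "('v \<Rightarrow> 'v \<Rightarrow> nat) \<Rightarrow> nat \<Rightarrow> ('v \<Rightarrow> 'v \<Rightarrow> 'v set) \<Rightarrow> 'v \<Rightarrow> 'v \<Rightarrow> 'v \<Rightarrow> 'v \<Rightarrow> int" where
  "Diff d \<delta> Cyl a b x y =
     int (card (N_L d \<delta> Cyl a b x - N_L d \<delta> Cyl a b y))
   - int (card (N_L d \<delta> Cyl a b y - N_L d \<delta> Cyl a b x))
   + int (card (N_R d \<delta> Cyl a b y - N_R d \<delta> Cyl a b x))
   - int (card (N_R d \<delta> Cyl a b x - N_R d \<delta> Cyl a b y))"

definition slice_rel :: "('v \<Rightarrow> 'v \<Rightarrow> nat) \<Rightarrow> nat \<Rightarrow> ('v \<Rightarrow> 'v \<Rightarrow> 'v set) \<Rightarrow> 'v \<Rightarrow> 'v \<Rightarrow> 'v rel" where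
  "slice_rel d \<delta> Cyl a b = {(x, y). x \<in> Cyl a b \<and> y \<in> Cyl a b \<and> Diff d \<delta> Cyl a b x y = 0}"

definition slices :: "('v \<Rightarrow> 'v \<Rightarrow> nat) \<Rightarrow> nat \<Rightarrow> ('v \<Rightarrow> 'v \<Rightarrow> 'v set) \<Rightarrow> 'v \<Rightarrow> 'v \<Rightarrow> 'v set set" where
  "slices d \<delta> Cyl a b = Cyl a b // slice_rel d \<delta> Cyl a b"

definition slice_less :: "('v \<Rightarrow> 'v \<Rightarrow> nat) \<Rightarrow> nat \<Rightarrow> ('v \<Rightarrow> 'v \<Rightarrow> 'v set) \<Rightarrow> 'v \<Rightarrow> 'v \<Rightarrow> 'v set rel" where
  "slice_less d \<delta> Cyl a b =
     {(S, S'). S \<in> slices d \<delta> Cyl a b \<and> S' \<in> slices d \<delta> Cyl a b \<and>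
               (\<forall>x\<in>S. \<forall>y\<in>S'. Diff d \<delta> Cyl a b x y < 0)}"

end

theory Submission
  imports Defs
begin

text \<open>Diff(x,y) telescopes: it equals g(x) - g(y) for the potential
  g(z) = |N_L(z)| - |N_R(z)|. The relation Diff = 0 is therefore the kernel of g, and
  the slices are ordered by the values of g.\<close>

lemma int_card_Diff_sub_int_card_Diff:
  assumes "finite A" "finite B"
  shows "int (card (A - B)) - int (card (B - A)) = int (card A) - int (card B)"
proof -
  have "card A = card (A \<inter> B) + card (A - B)" "card B = card (B \<inter> A) + card (B - A)"
    using assms by (simp_all add: card_Int_Diff)
  moreover have "B \<inter> A = A \<inter> B" by blast
  ultimately show ?thesis by simp
qed

definition slice_potential ::
    "('v \<Rightarrow> 'v \<Rightarrow> nat) \<Rightarrow> nat \<Rightarrow> ('v \<Rightarrow> 'v \<Rightarrow> 'v set) \<Rightarrow> 'v \<Rightarrow> 'v \<Rightarrow> 'v \<Rightarrow> int" where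
  "slice_potential d \<delta> Cyl a b z =
     int (card (N_L d \<delta> Cyl a b z)) - int (card (N_R d \<delta> Cyl a b z))"

lemma Diff_eq_slice_potential_diff:
  assumes "finite (Cyl a b)"
  shows "Diff d \<delta> Cyl a b x y = slice_potential d \<delta> Cyl a b x - slice_potential d \<delta> Cyl a b y"
proof -
  have fin: "finite (N_L d \<delta> Cyl a b z)" "finite (N_R d \<delta> Cyl a b z)" for z
    using assms by (simp_all add: N_L_def N_R_def)
  show ?thesis
    unfolding Diff_def slice_potential_def
    using int_card_Diff_sub_int_card_Diff[OF fin(1)[of x] fin(1)[of y]]
      int_card_Diff_sub_int_card_Diff[OF fin(2)[of y] fin(2)[of x]]
    by linarith
qed

lemma equiv_kernel_on:
  "equiv A {(x, y). x \<in> A \<and> y \<in> A \<and> g x = g y}"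
  unfolding equiv_def refl_on_def sym_def trans_def by auto

lemma quotient_kernel_onE:
  assumes "S \<in> A // {(x, y). x \<in> A \<and> y \<in> A \<and> g x = g y}"
  obtains x where "x \<in> A" "S = {y \<in> A. g x = g y}"
  using assms unfolding quotient_def by auto

lemma strict_linear_order_on_quotient_kernel_on:
  fixes A :: "'a set" and g :: "'a \<Rightarrow> 'b::linorder"
  defines "Q \<equiv> A // {(x, y). x \<in> A \<and> y \<in> A \<and> g x = g y}"
  shows "strict_linear_order_on Q {(S, S'). S \<in> Q \<and> S' \<in> Q \<and> (\<forall>x\<in>S. \<forall>y\<in>S'. g x < g y)}"
    (is "strict_linear_order_on Q ?less")
proof -
  have class_of: "\<exists>x\<in>A. S = {y \<in> A. g x = g y}" if "S \<in> Q" for S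
    using that unfolding Q_def by (elim quotient_kernel_onE) blast
  then have nonempty: "\<exists>s. s \<in> S" if "S \<in> Q" for S
    using that by blast
  have "trans ?less"
  proof (rule transI)
    fix S T U assume ST: "(S, T) \<in> ?less" and TU: "(T, U) \<in> ?less"
    then obtain t where t: "t \<in> T" using nonempty by blast
    have "g x < g u" if "x \<in> S" "u \<in> U" for x u
      using ST TU t that by (blast intro: order.strict_trans)
    then show "(S, U) \<in> ?less" using ST TU by blast
  qed
  moreover have "irrefl ?less"
  proof (rule irreflI)
    fix S show "(S, S) \<notin> ?less"
    proof
      assume "(S, S) \<in> ?less"
      moreover from this obtain s where "s \<in> S" using nonempty by blast
      ultimately show False by blast
    qed
  qed
  moreover have "total_on Q ?less"
  proof (rule total_onI)
    fix S T assume S: "S \<in> Q" and T: "T \<in> Q" and "S \<noteq> T"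
    obtain x z where "x \<in> A" "S = {y \<in> A. g x = g y}" "z \<in> A" "T = {y \<in> A. g z = g y}"
      using class_of[OF S] class_of[OF T] by blast
    moreover from this and \<open>S \<noteq> T\<close> have "g x \<noteq> g z" by auto
    ultimately show "(S, T) \<in> ?less \<or> (T, S) \<in> ?less"
      using S T by (cases "g x < g z") auto
  qed
  ultimately show ?thesis
    unfolding strict_linear_order_on_def by blast
qed

theorem lemma1p13:
  fixes d :: "'v \<Rightarrow> 'v \<Rightarrow> nat" and \<delta> :: nat and Cyl :: "'v \<Rightarrow> 'v \<Rightarrow> 'v set" and a b :: 'v
  assumes fin: "finite (Cyl a b)"
  shows "(\<forall>x\<in>Cyl a b. \<forall>y\<in>Cyl a b. \<forall>z\<in>Cyl a b.
            Diff d \<delta> Cyl a b x z = Diff d \<delta> Cyl a b x y + Diff d \<delta> Cyl a b y z)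
       \<and> equiv (Cyl a b) (slice_rel d \<delta> Cyl a b)
       \<and> (\<forall>x x' y y'. (x, x') \<in> slice_rel d \<delta> Cyl a b \<longrightarrow> (y, y') \<in> slice_rel d \<delta> Cyl a b
            \<longrightarrow> Diff d \<delta> Cyl a b x y = Diff d \<delta> Cyl a b x' y')
       \<and> strict_linear_order_on (slices d \<delta> Cyl a b) (slice_less d \<delta> Cyl a b)"
proof -
  let ?g = "slice_potential d \<delta> Cyl a b"
  have Diff_eq: "Diff d \<delta> Cyl a b x y = ?g x - ?g y" for x y
    using Diff_eq_slice_potential_diff[of Cyl a b, OF fin] .
  have rel_eq: "slice_rel d \<delta> Cyl a b = {(x, y). x \<in> Cyl a b \<and> y \<in> Cyl a b \<and> ?g x = ?g y}"
    by (auto simp: slice_rel_def Diff_eq)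
  have less_eq: "slice_less d \<delta> Cyl a b =
      {(S, S'). S \<in> slices d \<delta> Cyl a b \<and> S' \<in> slices d \<delta> Cyl a b \<and> (\<forall>x\<in>S. \<forall>y\<in>S'. ?g x < ?g y)}"
    by (simp add: slice_less_def Diff_eq)
  have "\<forall>x\<in>Cyl a b. \<forall>y\<in>Cyl a b. \<forall>z\<in>Cyl a b.
      Diff d \<delta> Cyl a b x z = Diff d \<delta> Cyl a b x y + Diff d \<delta> Cyl a b y z"
    by (simp add: Diff_eq)
  moreover have "equiv (Cyl a b) (slice_rel d \<delta> Cyl a b)"
    unfolding rel_eq by (rule equiv_kernel_on)
  moreover have "\<forall>x x' y y'. (x, x') \<in> slice_rel d \<delta> Cyl a b \<longrightarrow> (y, y') \<in> slice_rel d \<delta> Cyl a b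
      \<longrightarrow> Diff d \<delta> Cyl a b x y = Diff d \<delta> Cyl a b x' y'"
    by (simp add: rel_eq Diff_eq)
  moreover have "strict_linear_order_on (slices d \<delta> Cyl a b) (slice_less d \<delta> Cyl a b)"
    unfolding less_eq slices_def rel_eq by (rule strict_linear_order_on_quotient_kernel_on)
  ultimately show ?thesis
    by (intro conjI)
qed

end
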